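(* Let $k\ge1$, $n_0>1$, and let $A_0,\dots,A_{k-1}$ belong to the Bloch space $\mathfrak B$, not all identically zero. Suppose there is $\nu\in[0,1)$ such that for every $\theta\in[0,2\pi)$ the point $z_\theta=\nu e^{i\theta}$ satisfies $A_j(z_\theta)\ne0$ for some $j\in\{0,\dots,k-1\}$. Then every solution $f$ in $\mathbb D$ of $$(f^{(k)})^{n_0}+A_{k-1}(z)(f^{(k-1)})^{n_0}+\cdots+A_1(z)(f')^{n_0}+A_0(z)f^{n_0}=0$$ belongs to $\bigcap_{0<s<\infty}\mathfrak B^s$.
   Context: $\mathbb D$ is the open unit disk. For $s>0$, the Bloch-type space $\mathfrak B^s$ consists of analytic $g$ on $\mathbb D$ with $|g(0)|+\sup_{z\in\mathbb D}|g'(z)|(1-|z|^2)^s<\infty$; the Bloch space is $\mathfrak B=\mathfrak B^1$. A solution is an analytic function on $\mathbb D$ satisfying the equation, where the real powers $(f^{(j)})^{n_0}$ are understood via some choice of branches, so that $|(f^{(j)})^{n_0}|=|f^{(j)}|^{n_0}$. *)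

theory Defs
  imports "HOL-Analysis.Analysis"
begin

definition bloch_type :: "real \<Rightarrow> (complex \<Rightarrow> complex) set" where
  "bloch_type s = {g. g holomorphic_on ball 0 1 \<and>
     (\<exists>C. \<forall>z\<in>ball 0 1. norm (deriv g z) * (1 - (norm z)\<^sup>2) powr s \<le> C)}"

text \<open>p is a value of some branch of the real power w^a:
  p = exp (a * L) for some logarithm L of w (and 0 if w = 0).\<close>
definition power_branch_value :: "real \<Rightarrow> complex \<Rightarrow> complex \<Rightarrow> bool" where
  "power_branch_value a w p \<longleftrightarrow>
     (if w = 0 then p = 0 else (\<exists>L. exp L = w \<and> p = exp (complex_of_real a * L)))"

end

theory Submission
  imports Defs "HOL-Complex_Analysis.Complex_Analysis"
begin

text \<open>Taking moduli in the equation gives |f^(k)|^n0 <= (sum |A_j|) * max_{j<k} |f^(j)|^n0, and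
  as n0 >= 1 the n0-th root turns this into the linear bound
  |f^(k)| <= (1 + sum |A_j|) * max_{j<k} |f^(j)|. Bloch functions grow at most like
  log (1/(1 - |z|)), which is integrable along every radius, so Gronwall's inequality applied to
  1 + sum_{j<k} |f^(j)|^2 along a ray bounds f, ..., f^(k-1) uniformly on the disk. Hence
  |f'(z)| = O(log (1/(1 - |z|))), and the weight (1 - |z|^2)^s absorbs this for every s > 0.\<close>

lemma norm_power_branch_value:
  assumes "power_branch_value a w p"
  shows "cmod p = cmod w powr a"
proof (cases "w = 0")
  case True
  then show ?thesis using assms by (simp add: power_branch_value_def)
next
  case False
  then obtain L where L: "exp L = w" "p = exp (complex_of_real a * L)"
    using assms by (auto simp: power_branch_value_def)
  have "cmod w = exp (Re L)" using L norm_exp_eq_Re by metis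
  then show ?thesis using L by (simp add: powr_def norm_exp_eq_Re)
qed

lemma le_mult_of_powr_le_mult_powr:
  fixes x y S p :: real
  assumes "x \<ge> 0" "y \<ge> 0" "S \<ge> 0" "p \<ge> 1" "x powr p \<le> S * y powr p"
  shows "x \<le> (1 + S) * y"
proof -
  have "x = (x powr p) powr (1/p)" using assms by (simp add: powr_powr)
  also have "\<dots> \<le> (S * y powr p) powr (1/p)" using assms by (intro powr_mono2) auto
  also have "\<dots> = S powr (1/p) * y" using assms by (simp add: powr_mult powr_powr)
  also have "S powr (1/p) \<le> 1 + S"
  proof (cases "S \<le> 1")
    case True
    then have "S powr (1/p) \<le> 1 powr (1/p)" using assms by (intro powr_mono2) auto
    then show ?thesis using assms by simp
  next
    case False
    then have "S powr (1/p) \<le> S powr 1" using assms by (intro powr_mono) auto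
    then show ?thesis using assms by simp
  qed
  then have "S powr (1/p) * y \<le> (1 + S) * y" using assms by (intro mult_right_mono) auto
  finally show ?thesis .
qed

lemma power_equation_top_bound:
  fixes w P a :: "nat \<Rightarrow> complex" and p R :: real
  assumes "p \<ge> 1" "R \<ge> 0"
    and "\<forall>j\<le>k. power_branch_value p (w j) (P j)"
    and "P k + (\<Sum>j<k. a j * P j) = 0"
    and "\<forall>j<k. cmod (w j) \<le> R"
  shows "cmod (w k) \<le> (1 + (\<Sum>j<k. cmod (a j))) * R"
proof (rule le_mult_of_powr_le_mult_powr)
  have norm_P: "cmod (P j) = cmod (w j) powr p" if "j \<le> k" for j
    using assms(3) that norm_power_branch_value by blast
  have "cmod (w k) powr p = cmod (\<Sum>j<k. a j * P j)"
    using assms(4) norm_P[of k] by (metis add_eq_0_iff norm_minus_cancel order_refl)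
  also have "\<dots> \<le> (\<Sum>j<k. cmod (a j) * cmod (w j) powr p)"
    by (rule order_trans[OF norm_sum]) (simp add: norm_mult norm_P)
  also have "\<dots> \<le> (\<Sum>j<k. cmod (a j) * R powr p)"
    using assms(1,5) by (intro sum_mono mult_left_mono powr_mono2) auto
  finally show "cmod (w k) powr p \<le> (\<Sum>j<k. cmod (a j)) * R powr p"
    by (simp add: sum_distrib_right)
qed (use assms in \<open>auto simp: sum_nonneg\<close>)

lemma has_vector_derivative_along_ray:
  assumes h: "h holomorphic_on ball 0 1" and \<omega>: "cmod \<omega> = 1" and t: "\<bar>t\<bar> < 1"
  shows "((\<lambda>t. h (of_real t * \<omega>)) has_vector_derivative (\<omega> * deriv h (of_real t * \<omega>))) (at t)"
proof -
  have "((\<lambda>z. z * \<omega>) has_field_derivative \<omega>) (at (of_real t))"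
    by (auto intro!: derivative_eq_intros)
  from has_vector_derivative_real_field[OF this]
  have ray: "((\<lambda>t. of_real t * \<omega>) has_vector_derivative \<omega>) (at t)" by simp
  have "of_real t * \<omega> \<in> ball 0 1" using \<omega> t by (simp add: norm_mult)
  then have "(h has_field_derivative deriv h (of_real t * \<omega>)) (at (of_real t * \<omega>))"
    using h by (intro holomorphic_derivI) auto
  from field_vector_diff_chain_at[OF ray this] show ?thesis by (simp add: o_def)
qed

lemma has_real_derivative_cmod_square:
  assumes "(u has_vector_derivative u') (at t)"
  shows "((\<lambda>t. (cmod (u t))\<^sup>2) has_real_derivative 2 * Re (cnj (u t) * u')) (at t)"
proof -
  have "((\<lambda>t. Re (u t * cnj (u t))) has_real_derivative Re (u t * cnj u' + u' * cnj (u t))) (at t)"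
    by (intro has_field_derivative_Re has_vector_derivative_mult has_vector_derivative_cnj assms)
  moreover have "Re (u t * cnj u' + u' * cnj (u t)) = 2 * Re (cnj (u t) * u')"
    by (simp add: algebra_simps)
  moreover have "(\<lambda>t. Re (u t * cnj (u t))) = (\<lambda>t. (cmod (u t))\<^sup>2)"
    by (simp only: complex_norm_square[symmetric] Re_complex_of_real)
  ultimately show ?thesis by (simp only:)
qed

lemma gronwall_differential_inequality:
  fixes E E' G g :: "real \<Rightarrow> real"
  assumes "a \<le> b"
    and E: "\<And>t. t \<in> {a..b} \<Longrightarrow> (E has_real_derivative E' t) (at t)"
    and G: "\<And>t. t \<in> {a..b} \<Longrightarrow> (G has_real_derivative g t) (at t)"
    and le: "\<And>t. t \<in> {a<..<b} \<Longrightarrow> E' t \<le> g t * E t"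
  shows "E b \<le> E a * exp (G b - G a)"
proof -
  define F where "F = (\<lambda>t. E t * exp (- G t))"
  have F: "(F has_real_derivative (E' t - g t * E t) * exp (- G t)) (at t)" if "t \<in> {a..b}" for t
    unfolding F_def using E[OF that] G[OF that]
    by (auto intro!: derivative_eq_intros simp: algebra_simps)
  have "F b \<le> F a"
  proof (rule DERIV_nonpos_imp_decreasing_open[OF assms(1)])
    fix t assume "a < t" "t < b"
    then show "\<exists>y. (F has_real_derivative y) (at t) \<and> y \<le> 0"
      using F[of t] le[of t] by (intro exI[of _ "(E' t - g t * E t) * exp (- G t)"])
        (auto intro: mult_nonpos_nonneg)
  next
    show "continuous_on {a..b} F"
      using F by (intro continuous_at_imp_continuous_on ballI DERIV_isCont) blast
  qed
  then show ?thesis by (simp add: F_def exp_diff exp_minus field_simps)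
qed

lemma norm_le_sqrt_one_plus_sum_squares:
  fixes x :: "nat \<Rightarrow> 'a::real_normed_vector"
  assumes "j < k"
  shows "norm (x j) \<le> sqrt (1 + (\<Sum>i<k. (norm (x i))\<^sup>2))"
proof (rule real_le_rsqrt)
  have "(norm (x j))\<^sup>2 \<le> (\<Sum>i<k. (norm (x i))\<^sup>2)"
    using assms by (intro member_le_sum) auto
  then show "(norm (x j))\<^sup>2 \<le> 1 + (\<Sum>i<k. (norm (x i))\<^sup>2)" by simp
qed

lemma has_real_derivative_one_minus_mult_ln:
  fixes t :: real
  assumes "t < 1"
  shows "((\<lambda>t. (1 - t) * ln (1 - t) + t) has_real_derivative - ln (1 - t)) (at t)"
  using assms by (auto intro!: derivative_eq_intros)

lemma one_le_log_weight:
  fixes M CC t :: real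
  assumes "M \<ge> 1" "CC \<ge> 0" "0 \<le> t" "t < 1"
  shows "1 \<le> M + CC * - ln (1 - t)"
proof -
  have "ln (1 - t) \<le> 0" using assms by simp
  then have "CC * ln (1 - t) \<le> 0" using assms by (simp add: mult_nonneg_nonpos)
  then show ?thesis using assms by simp
qed

lemma one_minus_mult_ln_le:
  fixes r :: real
  assumes "0 \<le> r" "r < 1"
  shows "(1 - r) * ln (1 - r) + r \<le> 1"
proof -
  have "ln (1 - r) \<le> 0" using assms by simp
  then have "(1 - r) * ln (1 - r) \<le> 0" using assms by (simp add: mult_nonneg_nonpos)
  then show ?thesis using assms by linarith
qed

lemma sum_cross_terms_le:
  fixes a b :: "nat \<Rightarrow> complex"
  assumes "\<forall>j<k. cmod (a j) \<le> x" "\<forall>j<k. cmod (b j) \<le> y" "cmod \<omega> = 1"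
  shows "(\<Sum>j<k. 2 * Re (cnj (a j) * (\<omega> * b j))) \<le> 2 * real k * (x * y)"
proof -
  have "(\<Sum>j<k. 2 * Re (cnj (a j) * (\<omega> * b j))) \<le> (\<Sum>j<k. 2 * (x * y))"
  proof (rule sum_mono)
    fix j assume j: "j \<in> {..<k}"
    have "Re (cnj (a j) * (\<omega> * b j)) \<le> cmod (a j) * cmod (b j)"
      using complex_Re_le_cmod[of "cnj (a j) * (\<omega> * b j)"] assms(3) by (simp add: norm_mult)
    also have "\<dots> \<le> x * y"
      using assms j by (intro mult_mono) (auto intro: order_trans[OF norm_ge_zero])
    finally show "2 * Re (cnj (a j) * (\<omega> * b j)) \<le> 2 * (x * y)" by simp
  qed
  then show ?thesis by simp
qed

lemma ray_energy_bound:
  fixes u :: "nat \<Rightarrow> real \<Rightarrow> complex" and k :: nat and M CC r :: real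
  defines "E \<equiv> \<lambda>t. 1 + (\<Sum>j<k. (cmod (u j t))\<^sup>2)"
  assumes der: "\<And>j t. j < k \<Longrightarrow> \<bar>t\<bar> < 1 \<Longrightarrow> (u j has_vector_derivative (\<omega> * u (Suc j) t)) (at t)"
    and \<omega>: "cmod \<omega> = 1" and M: "M \<ge> 1" and CC: "CC \<ge> 0"
    and top: "\<And>t. 0 \<le> t \<Longrightarrow> t < 1 \<Longrightarrow> cmod (u k t) \<le> (M + CC * - ln (1 - t)) * sqrt (E t)"
    and r: "0 \<le> r" "r < 1"
  shows "E r \<le> E 0 * exp (2 * k * (M + CC))"
proof -
  define g where "g t = M + CC * - ln (1 - t)" for t
  define G where "G t = 2 * k * (M * t + CC * ((1 - t) * ln (1 - t) + t))" for t
  define E' where "E' t = (\<Sum>j<k. 2 * Re (cnj (u j t) * (\<omega> * u (Suc j) t)))" for t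
  have E_ge_1: "E t \<ge> 1" for t by (simp add: E_def sum_nonneg)
  have lower: "cmod (u j t) \<le> sqrt (E t)" if "j < k" for j t
    unfolding E_def using that by (rule norm_le_sqrt_one_plus_sum_squares)
  have g_ge_1: "g t \<ge> 1" if "0 \<le> t" "t < 1" for t
    unfolding g_def using M CC that by (rule one_le_log_weight)
  have next_deriv: "cmod (u (Suc j) t) \<le> g t * sqrt (E t)" if "j < k" "0 \<le> t" "t < 1" for j t
  proof (cases "Suc j < k")
    case True
    then show ?thesis
      using lower[of "Suc j" t] g_ge_1[OF that(2,3)] E_ge_1[of t]
      by (smt (verit) mult_le_cancel_right1 real_sqrt_ge_one)
  next
    case False
    then have "Suc j = k" using that by simp
    then show ?thesis using that top by (simp add: g_def)
  qed
  have "E r \<le> E 0 * exp (G r - G 0)"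
  proof (rule gronwall_differential_inequality[OF r(1)])
    fix t assume "t \<in> {0..r}"
    then have t: "\<bar>t\<bar> < 1" "t < 1" using r by auto
    have "((\<lambda>t. \<Sum>j<k. (cmod (u j t))\<^sup>2) has_real_derivative E' t) (at t)"
      unfolding E'_def by (intro DERIV_sum has_real_derivative_cmod_square der t) simp
    from DERIV_add[OF DERIV_const this]
    show "(E has_real_derivative E' t) (at t)" by (simp add: E_def)
    show "(G has_real_derivative 2 * k * g t) (at t)"
      unfolding G_def g_def
      by (rule derivative_eq_intros has_real_derivative_one_minus_mult_ln t | simp)+
  next
    fix t assume "t \<in> {0<..<r}"
    then have "0 \<le> t" "t < 1" using r by auto
    then have "E' t \<le> 2 * real k * (sqrt (E t) * (g t * sqrt (E t)))"
      unfolding E'_def using lower next_deriv \<omega> by (intro sum_cross_terms_le) auto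
    also have "\<dots> = 2 * k * g t * E t" using E_ge_1[of t] by (simp add: algebra_simps)
    finally show "E' t \<le> 2 * k * g t * E t" .
  qed
  also have "G r - G 0 \<le> 2 * k * (M + CC)"
  proof -
    have "M * r \<le> M" using r M by (simp add: mult_left_le)
    moreover have "CC * ((1 - r) * ln (1 - r) + r) \<le> CC * 1"
      by (rule mult_left_mono[OF one_minus_mult_ln_le[OF r] CC])
    ultimately show ?thesis by (simp add: G_def mult_left_mono)
  qed
  then have "E 0 * exp (G r - G 0) \<le> E 0 * exp (2 * k * (M + CC))"
    using E_ge_1[of 0] by simp
  finally show ?thesis .
qed

lemma le_div_one_minus_of_mult_le:
  fixes x t C :: real
  assumes "x * (1 - t\<^sup>2) \<le> C" "0 \<le> x" "0 \<le> t" "t < 1"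
  shows "x \<le> C / (1 - t)"
proof -
  have "t\<^sup>2 \<le> t" using assms by (simp add: power2_eq_square mult_left_le_one_le)
  then have "x * (1 - t) \<le> x * (1 - t\<^sup>2)" using assms by (intro mult_left_mono) auto
  then show ?thesis using assms by (simp add: field_simps)
qed

lemma bloch_type_one_log_growth:
  assumes "h \<in> bloch_type 1"
  obtains C where "C \<ge> 0" "\<forall>z\<in>ball 0 1. cmod (h z) \<le> cmod (h 0) + C * - ln (1 - cmod z)"
proof -
  obtain C where h: "h holomorphic_on ball 0 1"
    and C1: "\<forall>z\<in>ball 0 1. cmod (deriv h z) * (1 - (cmod z)\<^sup>2) powr 1 \<le> C"
    using assms unfolding bloch_type_def by blast
  have C: "cmod (deriv h z) * (1 - (cmod z)\<^sup>2) \<le> C" if "z \<in> ball 0 1" for z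
  proof -
    have "(cmod z)\<^sup>2 < 1" using that by (simp add: abs_square_less_1)
    then show ?thesis using C1[rule_format, OF that] by simp
  qed
  have C0: "C \<ge> 0" using C[of 0] by simp (meson norm_ge_zero order_trans)
  have "cmod (h z - h 0) \<le> C * - ln (1 - cmod z)" if z: "z \<in> ball 0 1" "z \<noteq> 0" for z
  proof -
    define r where "r = cmod z"
    define \<omega> where "\<omega> = z / of_real r"
    have \<omega>: "cmod \<omega> = 1" using z by (simp add: \<omega>_def r_def norm_divide)
    have z_eq: "z = of_real r * \<omega>" using z by (simp add: \<omega>_def r_def)
    have r: "0 < r" "r < 1" using z by (auto simp: r_def)
    have "norm (h (of_real r * \<omega>) - h (of_real 0 * \<omega>)) \<le> C * - ln (1 - r) - C * - ln (1 - 0)"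
    proof (rule differentiable_bound_general[OF r(1),
          where f'="\<lambda>t. \<omega> * deriv h (of_real t * \<omega>)" and \<phi>'="\<lambda>t. C / (1 - t)"])
      show "continuous_on {0..r} (\<lambda>t. h (of_real t * \<omega>))"
      proof (intro continuous_at_imp_continuous_on ballI)
        fix t assume "t \<in> {0..r}"
        then have "\<bar>t\<bar> < 1" using r by auto
        from has_vector_derivative_continuous[OF has_vector_derivative_along_ray[OF h \<omega> this]]
        show "isCont (\<lambda>t. h (of_real t * \<omega>)) t" .
      qed
      show "continuous_on {0..r} (\<lambda>t. C * - ln (1 - t))"
        using r by (intro continuous_intros) auto
      fix t assume t: "0 < t" "t < r"
      show "((\<lambda>t. h (of_real t * \<omega>)) has_vector_derivative \<omega> * deriv h (of_real t * \<omega>)) (at t)"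
        using has_vector_derivative_along_ray[OF h \<omega>] t r by auto
      show "((\<lambda>t. C * - ln (1 - t)) has_vector_derivative C / (1 - t)) (at t)"
        using t r by (auto intro!: derivative_eq_intros
            simp: has_real_derivative_iff_has_vector_derivative[symmetric] field_simps)
      have "cmod (of_real t * \<omega>) = t" using t \<omega> by (simp add: norm_mult)
      then have "cmod (deriv h (of_real t * \<omega>)) \<le> C / (1 - t)"
        using C[of "of_real t * \<omega>"] C0 t r by (intro le_div_one_minus_of_mult_le) auto
      then show "norm (\<omega> * deriv h (of_real t * \<omega>)) \<le> C / (1 - t)" using \<omega> by (simp add: norm_mult)
    qed
    then show ?thesis by (simp add: z_eq[symmetric] flip: r_def)
  qed
  then have "cmod (h z) \<le> cmod (h 0) + C * - ln (1 - cmod z)" if "z \<in> ball 0 1" for z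
    using that norm_triangle_ineq2[of "h z" "h 0"] by (cases "z = 0") force+
  with C0 show ?thesis by (intro that) auto
qed

lemma bloch_type_one_sum_log_growth:
  assumes "\<forall>j<k. A j \<in> bloch_type 1"
  obtains M CC where "M \<ge> 1" "CC \<ge> 0"
    "\<forall>z\<in>ball 0 1. 1 + (\<Sum>j<k. cmod (A j z)) \<le> M + CC * - ln (1 - cmod z)"
proof -
  have "\<forall>j. \<exists>c. j < k \<longrightarrow> c \<ge> 0 \<and> (\<forall>z\<in>ball 0 1. cmod (A j z) \<le> cmod (A j 0) + c * - ln (1 - cmod z))"
    using assms bloch_type_one_log_growth by metis
  then obtain C where C0: "\<And>j. j < k \<Longrightarrow> C j \<ge> 0"
    and C: "\<And>j z. j < k \<Longrightarrow> z \<in> ball 0 1 \<Longrightarrow> cmod (A j z) \<le> cmod (A j 0) + C j * - ln (1 - cmod z)"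
    by metis
  show ?thesis
  proof (rule that[of "1 + (\<Sum>j<k. cmod (A j 0))" "\<Sum>j<k. C j"])
    show "1 \<le> 1 + (\<Sum>j<k. cmod (A j 0))" "0 \<le> (\<Sum>j<k. C j)"
      using C0 by (auto intro: sum_nonneg)
    show "\<forall>z\<in>ball 0 1. 1 + (\<Sum>j<k. cmod (A j z))
        \<le> 1 + (\<Sum>j<k. cmod (A j 0)) + (\<Sum>j<k. C j) * - ln (1 - cmod z)"
    proof
      fix z :: complex assume z: "z \<in> ball 0 1"
      have "(\<Sum>j<k. cmod (A j z)) \<le> (\<Sum>j<k. cmod (A j 0) + C j * - ln (1 - cmod z))"
        using C z by (intro sum_mono) auto
      also have "\<dots> = (\<Sum>j<k. cmod (A j 0)) + (\<Sum>j<k. C j) * - ln (1 - cmod z)"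
        by (simp only: sum.distrib sum_distrib_right)
      finally show "1 + (\<Sum>j<k. cmod (A j z))
          \<le> 1 + (\<Sum>j<k. cmod (A j 0)) + (\<Sum>j<k. C j) * - ln (1 - cmod z)" by simp
    qed
  qed
qed
lemma higher_derivs_log_growth:
  fixes D :: "nat \<Rightarrow> complex \<Rightarrow> complex" and k :: nat and M CC :: real
  assumes hol: "\<And>j. j < k \<Longrightarrow> D j holomorphic_on ball 0 1"
    and D_Suc: "\<And>j. j < k \<Longrightarrow> deriv (D j) = D (Suc j)"
    and M: "M \<ge> 1" and CC: "CC \<ge> 0"
    and top: "\<And>z R. z \<in> ball 0 1 \<Longrightarrow> R \<ge> 0 \<Longrightarrow> \<forall>j<k. cmod (D j z) \<le> R \<Longrightarrow>
                cmod (D k z) \<le> (M + CC * - ln (1 - cmod z)) * R"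
  obtains K where "K \<ge> 0"
    "\<And>z j. z \<in> ball 0 1 \<Longrightarrow> j \<le> k \<Longrightarrow> cmod (D j z) \<le> (M + CC * - ln (1 - cmod z)) * K"
proof
  define K where "K = sqrt ((1 + (\<Sum>j<k. (cmod (D j 0))\<^sup>2)) * exp (2 * k * (M + CC)))"
  show "K \<ge> 0" by (simp add: K_def sum_nonneg)
  fix z :: complex and j :: nat
  assume z: "z \<in> ball 0 1" and j: "j \<le> k"
  define r where "r = cmod z"
  define \<omega> where "\<omega> = (if z = 0 then 1 else z / of_real r)"
  have \<omega>: "cmod \<omega> = 1" by (simp add: \<omega>_def r_def norm_divide)
  have r: "0 \<le> r" "r < 1" using z by (auto simp: r_def)
  define u where "u j t = D j (of_real t * \<omega>)" for j t
  define E where "E t = 1 + (\<Sum>j<k. (cmod (u j t))\<^sup>2)" for t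
  have E_ge_1: "E t \<ge> 1" for t by (simp add: E_def sum_nonneg)
  have lower: "cmod (u j t) \<le> sqrt (E t)" if "j < k" for j t
    unfolding E_def using that by (rule norm_le_sqrt_one_plus_sum_squares)
  have top_ray: "cmod (u k t) \<le> (M + CC * - ln (1 - t)) * sqrt (E t)" if "0 \<le> t" "t < 1" for t
  proof -
    have "cmod (of_real t * \<omega>) = t" using that \<omega> by (simp add: norm_mult)
    then show ?thesis
      using top[of "of_real t * \<omega>" "sqrt (E t)"] lower E_ge_1[of t] that by (simp add: u_def)
  qed
  have "E r \<le> E 0 * exp (2 * k * (M + CC))"
    unfolding E_def
  proof (rule ray_energy_bound[OF _ \<omega> M CC _ r])
    show "(u j has_vector_derivative \<omega> * u (Suc j) t) (at t)" if "j < k" "\<bar>t\<bar> < 1" for j t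
      using has_vector_derivative_along_ray[OF hol \<omega>, of j t] that by (simp add: u_def[abs_def] D_Suc)
  qed (use top_ray in \<open>simp add: E_def\<close>)
  then have E_r: "sqrt (E r) \<le> K" by (simp add: K_def E_def u_def)
  have g: "1 \<le> M + CC * - ln (1 - r)" using M CC r by (rule one_le_log_weight)
  have z_eq: "D j z = u j r" by (simp add: u_def \<omega>_def r_def)
  show "cmod (D j z) \<le> (M + CC * - ln (1 - cmod z)) * K"
  proof (cases "j = k")
    case True
    then have "cmod (D j z) \<le> (M + CC * - ln (1 - r)) * sqrt (E r)" using top_ray r z_eq by simp
    also have "\<dots> \<le> (M + CC * - ln (1 - r)) * K" using E_r g by (intro mult_left_mono) auto
    finally show ?thesis by (simp add: r_def)
  next
    case False
    then have "cmod (D j z) \<le> 1 * K" using lower[of j r] j E_r z_eq by simp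
    also have "\<dots> \<le> (M + CC * - ln (1 - r)) * K" using g \<open>K \<ge> 0\<close> by (intro mult_right_mono) auto
    finally show ?thesis by (simp add: r_def)
  qed
qed

lemma powr_one_minus_square_mult_ln_le:
  fixes r s :: real
  assumes "0 \<le> r" "r < 1" "s > 0"
  shows "(1 - r\<^sup>2) powr s * - ln (1 - r) \<le> 2 powr s / s"
proof -
  define x where "x = 1 / (1 - r)"
  have x: "x \<ge> 1" using assms by (simp add: x_def)
  have "- ln (1 - r) = ln (x powr s) / s" using assms x by (simp add: x_def ln_div ln_powr)
  also have "\<dots> \<le> x powr s / s"
    using ln_le_minus_one[of "x powr s"] x assms by (intro divide_right_mono) auto
  finally have ln_le: "- ln (1 - r) \<le> x powr s / s" .
  have "0 \<le> (1 - r)\<^sup>2" by simp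
  then have "1 - r\<^sup>2 \<le> 2 * (1 - r)" by (simp add: power2_eq_square algebra_simps)
  then have "(1 - r\<^sup>2) powr s \<le> (2 * (1 - r)) powr s"
    using assms by (intro powr_mono2) (auto simp: power2_eq_square mult_le_one)
  then have "(1 - r\<^sup>2) powr s * - ln (1 - r) \<le> (2 * (1 - r)) powr s * (x powr s / s)"
    using assms ln_le by (intro mult_mono) auto
  also have "\<dots> = 2 powr s * ((1 - r) powr s * x powr s) / s"
    using assms powr_mult[of 2 "1 - r" s] by simp
  also have "(1 - r) powr s * x powr s = 1"
    using assms powr_mult[of "1 - r" x s] by (simp add: x_def)
  finally show ?thesis by simp
qed

lemma log_growth_imp_bloch_type:
  assumes hol: "f holomorphic_on ball 0 1" and "s > 0" "b \<ge> 0"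
    and growth: "\<And>z. z \<in> ball 0 1 \<Longrightarrow> cmod (deriv f z) \<le> a + b * - ln (1 - cmod z)"
  shows "f \<in> bloch_type s"
proof -
  have "cmod (deriv f z) * (1 - (cmod z)\<^sup>2) powr s \<le> \<bar>a\<bar> + b * (2 powr s / s)"
    if z: "z \<in> ball 0 1" for z
  proof -
    define r where "r = cmod z"
    have r: "0 \<le> r" "r < 1" using z by (auto simp: r_def)
    define q where "q = (1 - r\<^sup>2) powr s"
    have "r\<^sup>2 < 1" using r by (simp add: abs_square_less_1)
    then have "q \<le> 1 powr s" unfolding q_def using \<open>s > 0\<close> r by (intro powr_mono2) auto
    then have q: "0 \<le> q" "q \<le> 1" by (auto simp: q_def)
    have "cmod (deriv f z) * q \<le> (a + b * - ln (1 - r)) * q"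
      using growth[OF z] q by (intro mult_right_mono) (auto simp: r_def)
    also have "\<dots> = a * q + b * (q * - ln (1 - r))" by (simp add: algebra_simps)
    also have "\<dots> \<le> \<bar>a\<bar> + b * (2 powr s / s)"
    proof (rule add_mono)
      have "a * q \<le> \<bar>a\<bar> * q" by (rule mult_right_mono[OF abs_ge_self q(1)])
      also have "\<dots> \<le> \<bar>a\<bar>" by (rule mult_left_le[OF q(2) abs_ge_zero])
      finally show "a * q \<le> \<bar>a\<bar>" .
      show "b * (q * - ln (1 - r)) \<le> b * (2 powr s / s)"
        using powr_one_minus_square_mult_ln_le[OF r \<open>s > 0\<close>] \<open>b \<ge> 0\<close>
        by (intro mult_left_mono) (auto simp: q_def)
    qed
    finally show ?thesis by (simp add: q_def r_def)
  qed
  with hol show ?thesis unfolding bloch_type_def by blast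
qed

theorem theorem3p5:
  fixes k :: nat and n0 :: real
    and A :: "nat \<Rightarrow> complex \<Rightarrow> complex"
    and f :: "complex \<Rightarrow> complex"
    and P :: "nat \<Rightarrow> complex \<Rightarrow> complex"
  assumes "k \<ge> 1" and "n0 > 1"
    and "\<forall>j<k. A j \<in> bloch_type 1"
    and "\<exists>j<k. \<exists>z\<in>ball 0 1. A j z \<noteq> 0"
    and "\<exists>\<nu>::real. 0 \<le> \<nu> \<and> \<nu> < 1 \<and>
           (\<forall>\<theta>\<in>{0..<2*pi}. \<exists>j<k. A j (complex_of_real \<nu> * cis \<theta>) \<noteq> 0)"
    and "f holomorphic_on ball 0 1"
    and "\<forall>j\<le>k. \<forall>z\<in>ball 0 1. power_branch_value n0 ((deriv ^^ j) f z) (P j z)"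
    and "\<forall>z\<in>ball 0 1. P k z + (\<Sum>j<k. A j z * P j z) = 0"
  shows "\<forall>s>0. f \<in> bloch_type s"
proof -
  obtain M CC where M: "M \<ge> 1" and CC: "CC \<ge> 0"
    and coeffs: "\<forall>z\<in>ball 0 1. 1 + (\<Sum>j<k. cmod (A j z)) \<le> M + CC * - ln (1 - cmod z)"
    using bloch_type_one_sum_log_growth[OF assms(3)] by blast
  define D where "D j = (deriv ^^ j) f" for j
  have hol: "D j holomorphic_on ball 0 1" for j
    unfolding D_def using assms(6) by (rule holomorphic_higher_deriv) simp
  have top: "cmod (D k z) \<le> (M + CC * - ln (1 - cmod z)) * R"
    if z: "z \<in> ball 0 1" and "R \<ge> 0" "\<forall>j<k. cmod (D j z) \<le> R" for z R
  proof -
    have "cmod (D k z) \<le> (1 + (\<Sum>j<k. cmod (A j z))) * R"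
      using assms(2,7,8) z that by (intro power_equation_top_bound[where p=n0 and P="\<lambda>j. P j z"])
        (auto simp: D_def)
    also have "\<dots> \<le> (M + CC * - ln (1 - cmod z)) * R"
      using coeffs z \<open>R \<ge> 0\<close> by (intro mult_right_mono) auto
    finally show ?thesis .
  qed
  obtain K where K: "K \<ge> 0"
    and bound: "\<And>z j. z \<in> ball 0 1 \<Longrightarrow> j \<le> k \<Longrightarrow> cmod (D j z) \<le> (M + CC * - ln (1 - cmod z)) * K"
    using higher_derivs_log_growth[where D=D, OF hol _ M CC top] by (auto simp: D_def)
  have "cmod (deriv f z) \<le> M * K + CC * K * - ln (1 - cmod z)" if "z \<in> ball 0 1" for z
    using bound[OF that assms(1)] by (simp add: D_def algebra_simps)
  moreover have "CC * K \<ge> 0" using CC K by simp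
  ultimately show ?thesis
    using log_growth_imp_bloch_type[OF assms(6)] by blast
qed

end
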